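(* Let $(G,k)$ be an instance of PITVD, let $x$ be a cut vertex of $G$ and let $C$ be a pendant tree attached to $x$. Suppose some vertex of $C$ has degree at least $3$ in $G$. Let $H_C=\{u\in C: d_G(u)\ge3\}$, let $v\in H_C$ be the (unique) vertex of $H_C$ with the smallest distance from $x$, let $P_{x,v}$ be the unique path between $x$ and $v$ in $G[C\cup\{x\}]$, and let $D$ be the set consisting of the vertices of $P_{x,v}$ together with two arbitrary neighbors of $v$ in $C$ not on $P_{x,v}$. Then $(G,k)$ is a yes-instance of PITVD if and only if $(G-(C\setminus D),k)$ is a yes-instance of PITVD.
   Context: PITVD: the input is an undirected multigraph $G$ (no self-loops) and an integer $k$; the question is whether there exists $X\subseteq V(G)$ with $|X|\le k$ such that $G-X$ is a simple graph and every connected component of $G-X$ is a proper interval graph or a tree. If $x$ is a cut vertex of $G$ and $C$ is a connected component of $G-x$ that is a tree such that $C\cup\{x\}$ induces a tree in $G$, then $C$ is called a pendant tree attached to $x$. *)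

theory Defs
  imports Main "HOL.Real"
begin

text \<open>An undirected multigraph without self-loops is a finite vertex set V together
  with an edge-multiplicity function m: m u v is the number of edges between u and v.\<close>

definition multigraph :: "'a set \<Rightarrow> ('a \<Rightarrow> 'a \<Rightarrow> nat) \<Rightarrow> bool" where
  "multigraph V m \<longleftrightarrow> finite V \<and> (\<forall>u v. m u v = m v u) \<and> (\<forall>v. m v v = 0)
     \<and> (\<forall>u v. 0 < m u v \<longrightarrow> u \<in> V \<and> v \<in> V)"

definition del_edges :: "('a \<Rightarrow> 'a \<Rightarrow> nat) \<Rightarrow> 'a set \<Rightarrow> ('a \<Rightarrow> 'a \<Rightarrow> nat)" where
  "del_edges m X = (\<lambda>u v. if u \<in> X \<or> v \<in> X then 0 else m u v)"

definition simple_graph :: "'a set \<Rightarrow> ('a \<Rightarrow> 'a \<Rightarrow> nat) \<Rightarrow> bool" where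
  "simple_graph S m \<longleftrightarrow> (\<forall>u\<in>S. \<forall>v\<in>S. m u v \<le> 1)"

definition degree :: "'a set \<Rightarrow> ('a \<Rightarrow> 'a \<Rightarrow> nat) \<Rightarrow> 'a \<Rightarrow> nat" where
  "degree V m u = (\<Sum>w\<in>V. m u w)"

definition walk_in :: "'a set \<Rightarrow> ('a \<Rightarrow> 'a \<Rightarrow> nat) \<Rightarrow> 'a list \<Rightarrow> bool" where
  "walk_in S m ps \<longleftrightarrow> ps \<noteq> [] \<and> set ps \<subseteq> S
     \<and> (\<forall>i. Suc i < length ps \<longrightarrow> 0 < m (ps ! i) (ps ! Suc i))"

definition path_in :: "'a set \<Rightarrow> ('a \<Rightarrow> 'a \<Rightarrow> nat) \<Rightarrow> 'a \<Rightarrow> 'a \<Rightarrow> 'a list \<Rightarrow> bool" where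
  "path_in S m a b ps \<longleftrightarrow> walk_in S m ps \<and> distinct ps \<and> hd ps = a \<and> last ps = b"

definition dist :: "'a set \<Rightarrow> ('a \<Rightarrow> 'a \<Rightarrow> nat) \<Rightarrow> 'a \<Rightarrow> 'a \<Rightarrow> nat" where
  "dist V m a b = (LEAST n. \<exists>ps. walk_in V m ps \<and> hd ps = a \<and> last ps = b \<and> length ps = Suc n)"

definition connected_on :: "'a set \<Rightarrow> ('a \<Rightarrow> 'a \<Rightarrow> nat) \<Rightarrow> bool" where
  "connected_on S m \<longleftrightarrow> S \<noteq> {} \<and>
     (\<forall>u\<in>S. \<forall>v\<in>S. \<exists>ps. walk_in S m ps \<and> hd ps = u \<and> last ps = v)"

definition component :: "'a set \<Rightarrow> ('a \<Rightarrow> 'a \<Rightarrow> nat) \<Rightarrow> 'a set \<Rightarrow> bool" where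
  "component V m C \<longleftrightarrow> C \<subseteq> V \<and> connected_on C m \<and>
     (\<forall>C'. C \<subseteq> C' \<and> C' \<subseteq> V \<and> connected_on C' m \<longrightarrow> C' = C)"

definition has_cycle :: "'a set \<Rightarrow> ('a \<Rightarrow> 'a \<Rightarrow> nat) \<Rightarrow> bool" where
  "has_cycle S m \<longleftrightarrow> (\<exists>cs. 3 \<le> length cs \<and> distinct cs \<and> walk_in S m cs
       \<and> 0 < m (last cs) (hd cs))"

definition is_tree :: "'a set \<Rightarrow> ('a \<Rightarrow> 'a \<Rightarrow> nat) \<Rightarrow> bool" where
  "is_tree S m \<longleftrightarrow> simple_graph S m \<and> connected_on S m \<and> \<not> has_cycle S m"

definition proper_interval :: "'a set \<Rightarrow> ('a \<Rightarrow> 'a \<Rightarrow> nat) \<Rightarrow> bool" where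
  "proper_interval S m \<longleftrightarrow> simple_graph S m \<and>
     (\<exists>l r :: 'a \<Rightarrow> real. (\<forall>v\<in>S. l v \<le> r v)
        \<and> (\<forall>u\<in>S. \<forall>v\<in>S. u \<noteq> v \<longrightarrow> (0 < m u v \<longleftrightarrow> l u \<le> r v \<and> l v \<le> r u))
        \<and> (\<forall>u\<in>S. \<forall>v\<in>S. \<not> ({l u..r u} \<subset> {l v..r v})))"

definition pitvd :: "'a set \<Rightarrow> ('a \<Rightarrow> 'a \<Rightarrow> nat) \<Rightarrow> nat \<Rightarrow> bool" where
  "pitvd V m k \<longleftrightarrow> (\<exists>X. X \<subseteq> V \<and> card X \<le> k
     \<and> simple_graph (V - X) (del_edges m X)
     \<and> (\<forall>C. component (V - X) (del_edges m X) C \<longrightarrow>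
            proper_interval C (del_edges m X) \<or> is_tree C (del_edges m X)))"

definition cut_vertex :: "'a set \<Rightarrow> ('a \<Rightarrow> 'a \<Rightarrow> nat) \<Rightarrow> 'a \<Rightarrow> bool" where
  "cut_vertex V m x \<longleftrightarrow> x \<in> V \<and>
     card {C. component V m C} < card {C. component (V - {x}) (del_edges m {x}) C}"

definition pendant_tree :: "'a set \<Rightarrow> ('a \<Rightarrow> 'a \<Rightarrow> nat) \<Rightarrow> 'a \<Rightarrow> 'a set \<Rightarrow> bool" where
  "pendant_tree V m x C \<longleftrightarrow> cut_vertex V m x
     \<and> component (V - {x}) (del_edges m {x}) C
     \<and> is_tree C (del_edges m {x})
     \<and> is_tree (C \<union> {x}) m"

end

theory Submission
  imports Defs
begin

text \<open>Removing vertices can only help, since the class of graphs all of whose components are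
  proper interval graphs or trees is closed under induced subgraphs. Conversely, take a solution X
  of the reduced graph; if it deletes a or b but no vertex of P, delete v instead. Since v is the
  branching vertex of C closest to x, the inner vertices of P have degree two, so every connected
  set containing x and a vertex of C outside P contains all of P. Such a set must induce a tree:
  a cycle through C would lie in the tree induced by C and x, and a cycle outside C, joined to P,
  would give a connected subgraph of the reduced graph that is neither a tree nor claw-free,
  because v, its predecessor on P, a and b form a claw.\<close>

section \<open>Walks, paths and cycles\<close>

lemma walk_in_iff_successively:
  "walk_in S m ps \<longleftrightarrow> ps \<noteq> [] \<and> set ps \<subseteq> S \<and> successively (\<lambda>u w. 0 < m u w) ps"
  unfolding walk_in_def successively_conv_nth by simp

lemma walk_in_mono: "walk_in S m ps \<Longrightarrow> S \<subseteq> S' \<Longrightarrow> walk_in S' m ps"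
  unfolding walk_in_def by blast

lemma walk_in_set: "walk_in S m ps \<Longrightarrow> walk_in (set ps) m ps"
  unfolding walk_in_def by blast

lemma walk_in_Cons:
  "walk_in S m (u # ps) \<longleftrightarrow> u \<in> S \<and> (ps = [] \<or> 0 < m u (hd ps) \<and> walk_in S m ps)"
  unfolding walk_in_iff_successively by (auto simp: successively_Cons)

lemma walk_in_append:
  assumes "walk_in S m xs" "walk_in S m ys" "last xs = hd ys"
  shows "walk_in S m (xs @ tl ys)" "hd (xs @ tl ys) = hd xs" "last (xs @ tl ys) = last ys"
  using assms unfolding walk_in_iff_successively
  by (cases ys; auto simp: successively_append_iff successively_Cons)+

lemma walk_in_rev:
  assumes "walk_in S m xs" "\<forall>u w. m u w = m w u"
  shows "walk_in S m (rev xs)"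
proof -
  have "successively (\<lambda>u w. 0 < m w u) xs"
    using assms unfolding walk_in_iff_successively by (metis (no_types, lifting) successively_mono)
  then show ?thesis
    using assms(1) unfolding walk_in_iff_successively by simp
qed

lemma walk_in_take: "walk_in S m xs \<Longrightarrow> 0 < n \<Longrightarrow> walk_in S m (take n xs)"
  unfolding walk_in_def by (auto dest: in_set_takeD)

lemma walk_in_drop: "walk_in S m xs \<Longrightarrow> n < length xs \<Longrightarrow> walk_in S m (drop n xs)"
  unfolding walk_in_def by (auto dest: in_set_dropD)

lemma walk_in_cong:
  assumes "\<forall>u\<in>S. \<forall>w\<in>S. m' u w = m u w"
  shows "walk_in S m' ps \<longleftrightarrow> walk_in S m ps"
proof -
  have "set ps \<subseteq> S \<Longrightarrow> successively (\<lambda>u w. 0 < m' u w) ps = successively (\<lambda>u w. 0 < m u w) ps"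
    using assms by (intro successively_cong refl) (metis subsetD)
  then show ?thesis
    unfolding walk_in_iff_successively by blast
qed

lemma walk_in_suffix_from:
  assumes "walk_in S m ws" "u \<in> set ws"
  obtains W where "walk_in S m W" "hd W = u" "last W = last ws" "u \<notin> set (tl W)"
    "length W \<le> length ws"
proof -
  obtain pre suf where ws: "ws = pre @ u # suf" "u \<notin> set suf"
    using split_list_last[OF assms(2)] by blast
  have "walk_in S m (u # suf)"
    using walk_in_drop[OF assms(1), of "length pre"] ws(1) by simp
  then show ?thesis
    using that[of "u # suf"] ws by simp
qed

lemma walk_in_imp_path_in:
  "walk_in S m ws \<Longrightarrow> \<exists>ps. path_in S m (hd ws) (last ws) ps \<and> set ps \<subseteq> set ws"
proof (induction "length ws" arbitrary: ws rule: less_induct)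
  case less
  show ?case
  proof (cases "distinct ws")
    case True
    then show ?thesis
      using less.prems unfolding path_in_def by auto
  next
    case False
    then obtain xs ys zs y where ws: "ws = xs @ [y] @ ys @ [y] @ zs"
      using not_distinct_decomp by blast
    define ws' where "ws' = xs @ [y] @ zs"
    have "walk_in S m ws'"
      using less.prems unfolding ws ws'_def walk_in_iff_successively
      by (auto simp: successively_append_iff successively_Cons)
    moreover have "length ws' < length ws" "hd ws' = hd ws" "last ws' = last ws"
      "set ws' \<subseteq> set ws"
      unfolding ws ws'_def by (cases xs; cases zs; auto)+
    ultimately show ?thesis
      using less.hyps by fastforce
  qed
qed

lemma has_cycle_mono: "has_cycle S m \<Longrightarrow> S \<subseteq> S' \<Longrightarrow> has_cycle S' m"
  unfolding has_cycle_def using walk_in_mono by blast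

lemma has_cycle_cong:
  assumes "\<forall>u\<in>S. \<forall>w\<in>S. m' u w = m u w"
  shows "has_cycle S m' \<longleftrightarrow> has_cycle S m"
proof -
  have "m' (last cs) (hd cs) = m (last cs) (hd cs)" if "set cs \<subseteq> S" "cs \<noteq> []" for cs
    using that assms by (meson hd_in_set last_in_set subsetD)
  then show ?thesis
    unfolding has_cycle_def walk_in_cong[OF assms] by (metis walk_in_def)
qed

text \<open>Closing the two walks at their first common vertex after u gives the cycle.\<close>
lemma diverging_paths_has_cycle:
  assumes sym: "\<forall>u w. m u w = m w u"
    and walks: "walk_in S m (u # A)" "walk_in S m (u # B)"
    and distinct: "distinct (u # A)" "distinct (u # B)"
    and ne: "A \<noteq> []" "B \<noteq> []" "hd A \<noteq> hd B"
    and meet: "set A \<inter> set B \<noteq> {}"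
  shows "has_cycle S m"
proof -
  obtain A1 z A2 where A: "A = A1 @ z # A2" "z \<in> set B" "\<forall>y\<in>set A1. y \<notin> set B"
    using split_list_first_propE[of A "\<lambda>y. y \<in> set B"] meet by blast
  obtain B1 B2 where B: "B = B1 @ z # B2" "z \<notin> set B1"
    using split_list_first[OF A(2)] by blast
  define cs where "cs = u # A1 @ z # rev B1"
  have "walk_in S m (u # A1 @ [z])"
    using walk_in_take[OF walks(1), of "Suc (Suc (length A1))"] A(1) by simp
  moreover have "walk_in S m (u # B1 @ [z])"
    using walk_in_take[OF walks(2), of "Suc (Suc (length B1))"] B(1) by simp
  then have "walk_in S m (rev (u # B1 @ [z]))"
    using walk_in_rev sym by blast
  ultimately have closed: "walk_in S m (cs @ [u])"
    using walk_in_append[of S m "u # A1 @ [z]" "rev (u # B1 @ [z])"] unfolding cs_def by simp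
  have "3 \<le> length cs"
    using ne A(1) B(1) unfolding cs_def by (cases A1; cases B1) auto
  moreover have "distinct cs"
    using distinct A B unfolding cs_def by auto
  moreover have "walk_in S m cs" "0 < m (last cs) (hd cs)"
  proof -
    have "successively (\<lambda>u w. 0 < m u w) (cs @ [u])" "set cs \<subseteq> S" "cs \<noteq> []"
      using closed unfolding walk_in_iff_successively cs_def by auto
    then show "walk_in S m cs" "0 < m (last cs) (hd cs)"
      unfolding walk_in_iff_successively successively_append_iff by (auto simp: cs_def)
  qed
  ultimately show ?thesis
    unfolding has_cycle_def by blast
qed

lemma path_in_unique:
  assumes acyclic: "\<not> has_cycle S m" and sym: "\<forall>u w. m u w = m w u"
  shows "path_in S m u w ps \<Longrightarrow> path_in S m u w qs \<Longrightarrow> ps = qs"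
proof (induction ps arbitrary: u qs)
  case Nil
  then show ?case
    unfolding path_in_def walk_in_def by simp
next
  case (Cons u' A)
  obtain B where qs: "qs = u # B" and u': "u' = u"
    using Cons.prems unfolding path_in_def walk_in_def by (cases qs) auto
  have pA: "walk_in S m (u # A)" "distinct (u # A)" "last (u # A) = w"
    and pB: "walk_in S m (u # B)" "distinct (u # B)" "last (u # B) = w"
    using Cons.prems qs u' unfolding path_in_def by auto
  show ?case
  proof (cases "A = [] \<or> B = []")
    case True
    then have "A = [] \<and> B = []"
      using pA pB by (metis distinct.simps(2) last.simps last_in_set)
    then show ?thesis
      using qs u' by simp
  next
    case False
    show ?thesis
    proof (cases "hd A = hd B")
      case True
      then have "path_in S m (hd A) w A" "path_in S m (hd A) w B"
        using pA pB False unfolding path_in_def walk_in_Cons by auto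
      then show ?thesis
        using Cons.IH qs u' by simp
    next
      case diverge: False
      have "w = last A" "w = last B"
        using pA(3) pB(3) False by auto
      then have "w \<in> set A \<inter> set B"
        using False by (metis IntI last_in_set)
      then have "has_cycle S m"
        using diverging_paths_has_cycle[OF sym pA(1) pB(1) pA(2) pB(2)] False diverge by blast
      then show ?thesis
        using acyclic by simp
    qed
  qed
qed

lemma path_in_subset_walk:
  assumes "\<not> has_cycle S m" "\<forall>u w. m u w = m w u"
    and "path_in S m u w ps" "walk_in S m ws" "hd ws = u" "last ws = w"
  shows "set ps \<subseteq> set ws"
  using walk_in_imp_path_in[OF assms(4)] path_in_unique[OF assms(1,2,3)] assms(5,6) by blast

lemma degree_ge_3:
  assumes "finite V" "n1 \<in> V" "n2 \<in> V" "n3 \<in> V" "n1 \<noteq> n2" "n1 \<noteq> n3" "n2 \<noteq> n3"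
    "0 < m u n1" "0 < m u n2" "0 < m u n3"
  shows "3 \<le> degree V m u"
proof -
  have "3 \<le> m u n1 + m u n2 + m u n3"
    using assms(8-10) by linarith
  also have "\<dots> = (\<Sum>w\<in>{n1, n2, n3}. m u w)"
    using assms(5-7) by simp
  also have "\<dots> \<le> degree V m u"
    unfolding degree_def using assms(1-4) by (intro sum_mono2) auto
  finally show ?thesis .
qed

lemma dist_le_walk:
  "walk_in V m ws \<Longrightarrow> dist V m (hd ws) (last ws) \<le> length ws - 1"
  unfolding dist_def by (rule Least_le) (auto simp: walk_in_def)

lemma walk_of_length_dist:
  assumes "walk_in V m ws"
  obtains ps where "walk_in V m ps" "hd ps = hd ws" "last ps = last ws"
    "length ps = Suc (dist V m (hd ws) (last ws))"
proof -
  have "\<exists>n ps. walk_in V m ps \<and> hd ps = hd ws \<and> last ps = last ws \<and> length ps = Suc n"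
    using assms by (intro exI[of _ "length ws - 1"] exI[of _ ws]) (auto simp: walk_in_def)
  then show ?thesis
    using LeastI_ex[of "\<lambda>n. \<exists>ps. walk_in V m ps \<and> hd ps = hd ws \<and> last ps = last ws
      \<and> length ps = Suc n"] that unfolding dist_def by blast
qed

lemma cycle_minus_vertex_walk:
  assumes "3 \<le> length cs" "distinct cs" "walk_in S m cs" "0 < m (last cs) (hd cs)"
  obtains ws where "walk_in S m ws" "set ws = set cs - {y}"
proof (cases "y \<in> set cs")
  case True
  obtain xs ys where cs: "cs = xs @ y # ys"
    using split_list[OF True] by blast
  have "ys = [] \<or> xs = [] \<or> 0 < m (last ys) (hd xs)"
    using assms(4) unfolding cs by (cases xs) (auto split: if_splits)
  then have "successively (\<lambda>u w. 0 < m u w) (ys @ xs)"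
    using assms(3) unfolding cs walk_in_iff_successively
    by (auto simp: successively_append_iff successively_Cons)
  moreover have "ys @ xs \<noteq> []" "set (ys @ xs) = set cs - {y}" "set cs \<subseteq> S"
    using assms(1-3) unfolding cs walk_in_def by auto
  ultimately show ?thesis
    using that[of "ys @ xs"] unfolding walk_in_iff_successively by auto
next
  case False
  then show ?thesis
    using that[of cs] assms(3) by simp
qed

section \<open>Connectivity\<close>

lemma connected_onI:
  assumes "z \<in> S"
    and "\<And>p. p \<in> S \<Longrightarrow> \<exists>ps. walk_in S m ps \<and> hd ps = p \<and> last ps = z"
    and "\<And>q. q \<in> S \<Longrightarrow> \<exists>ps. walk_in S m ps \<and> hd ps = z \<and> last ps = q"
  shows "connected_on S m"
  unfolding connected_on_def
proof (intro conjI ballI)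
  fix p q assume "p \<in> S" "q \<in> S"
  then obtain ps qs where "walk_in S m ps" "hd ps = p" "last ps = z"
    "walk_in S m qs" "hd qs = z" "last qs = q"
    using assms(2,3) by blast
  then show "\<exists>ws. walk_in S m ws \<and> hd ws = p \<and> last ws = q"
    using walk_in_append[of S m ps qs] by metis
qed (use assms(1) in blast)

lemma connected_on_cong:
  assumes "\<forall>u\<in>S. \<forall>w\<in>S. m' u w = m u w"
  shows "connected_on S m' \<longleftrightarrow> connected_on S m"
  unfolding connected_on_def walk_in_cong[OF assms] ..

lemma connected_on_Un:
  assumes "connected_on A m" "connected_on B m" "A \<inter> B \<noteq> {}"
  shows "connected_on (A \<union> B) m"
proof -
  obtain z where z: "z \<in> A" "z \<in> B"
    using assms(3) by blast
  have "\<exists>ps. walk_in (A \<union> B) m ps \<and> hd ps = p \<and> last ps = q"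
    if "p \<in> X" "q \<in> X" "X = A \<or> X = B" for X p q
    using that assms(1,2) walk_in_mono[of X m _ "A \<union> B"] unfolding connected_on_def by blast
  then show ?thesis
    using z by (intro connected_onI[of z]) blast+
qed

lemma connected_on_edge:
  assumes "0 < m u w" "\<forall>u w. m u w = m w u"
  shows "connected_on {u, w} m"
proof (rule connected_onI[of u])
  have "walk_in {u, w} m [u]" "walk_in {u, w} m [u, w]" "walk_in {u, w} m [w, u]"
    using assms unfolding walk_in_Cons by auto
  then show "\<exists>ps. walk_in {u, w} m ps \<and> hd ps = p \<and> last ps = u"
    and "\<exists>ps. walk_in {u, w} m ps \<and> hd ps = u \<and> last ps = p" if "p \<in> {u, w}" for p
    using that by fastforce+
qed simp

lemma connected_on_set_walk:
  assumes "\<forall>u w. m u w = m w u"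
  shows "walk_in S m ws \<Longrightarrow> connected_on (set ws) m"
proof (induction ws)
  case Nil
  then show ?case
    unfolding walk_in_def by simp
next
  case (Cons u ws)
  show ?case
  proof (cases ws)
    case Nil
    then show ?thesis
      using Cons.prems by (auto simp: connected_on_def walk_in_Cons intro!: exI[of _ "[u]"])
  next
    case (Cons w ws')
    then have "connected_on {u, w} m" "connected_on (set ws) m"
      using Cons.prems Cons.IH connected_on_edge[OF _ assms] unfolding walk_in_Cons by auto
    then have "connected_on ({u, w} \<union> set ws) m"
      using Cons by (intro connected_on_Un) auto
    then show ?thesis
      using Cons by (simp add: insert_absorb)
  qed
qed

section \<open>Proper interval graphs and trees\<close>

lemma simple_graph_mono: "simple_graph S m \<Longrightarrow> S' \<subseteq> S \<Longrightarrow> simple_graph S' m"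
  unfolding simple_graph_def by blast

lemma simple_graph_cong:
  assumes "\<forall>u\<in>S. \<forall>w\<in>S. m' u w = m u w"
  shows "simple_graph S m' \<longleftrightarrow> simple_graph S m"
  using assms unfolding simple_graph_def by auto

lemma is_tree_cong:
  assumes "\<forall>u\<in>S. \<forall>w\<in>S. m' u w = m u w"
  shows "is_tree S m' \<longleftrightarrow> is_tree S m"
  unfolding is_tree_def
  using simple_graph_cong[OF assms] connected_on_cong[OF assms] has_cycle_cong[OF assms] by simp

lemma is_tree_subset:
  "is_tree S m \<Longrightarrow> S' \<subseteq> S \<Longrightarrow> connected_on S' m \<Longrightarrow> is_tree S' m"
  unfolding is_tree_def using simple_graph_mono has_cycle_mono by blast

lemma proper_interval_cong:
  assumes "\<forall>u\<in>S. \<forall>w\<in>S. m' u w = m u w"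
  shows "proper_interval S m' \<longleftrightarrow> proper_interval S m"
  unfolding proper_interval_def using simple_graph_cong[OF assms] assms by simp

lemma proper_interval_subset:
  assumes "proper_interval S m" "S' \<subseteq> S"
  shows "proper_interval S' m"
proof -
  obtain l r :: "'a \<Rightarrow> real" where lr: "\<forall>v\<in>S. l v \<le> r v"
    "\<forall>u\<in>S. \<forall>v\<in>S. u \<noteq> v \<longrightarrow> (0 < m u v \<longleftrightarrow> l u \<le> r v \<and> l v \<le> r u)"
    "\<forall>u\<in>S. \<forall>v\<in>S. \<not> ({l u..r u} \<subset> {l v..r v})"
    using assms(1) unfolding proper_interval_def by blast
  have restrict: "\<forall>u\<in>S'. \<forall>v\<in>S'. Q u v" if "\<forall>u\<in>S. \<forall>v\<in>S. Q u v" for Q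
    using that assms(2) by blast
  have "simple_graph S' m"
    using assms simple_graph_mono unfolding proper_interval_def by blast
  then show ?thesis
    unfolding proper_interval_def using lr(1) assms(2) restrict[OF lr(2)] restrict[OF lr(3)]
    by (intro conjI exI[of _ l] exI[of _ r]) auto
qed

text \<open>The centre's interval meets three pairwise disjoint intervals, so one of them lies
  strictly inside it.\<close>
lemma proper_interval_no_claw:
  assumes pi: "proper_interval S m"
    and in_S: "v \<in> S" "p \<in> S" "a \<in> S" "b \<in> S"
    and ne: "v \<noteq> p" "v \<noteq> a" "v \<noteq> b" "p \<noteq> a" "p \<noteq> b" "a \<noteq> b"
    and adj: "0 < m v p" "0 < m v a" "0 < m v b"
    and nonadj: "m p a = 0" "m p b = 0" "m a b = 0"
  shows False
proof -
  obtain l r :: "'a \<Rightarrow> real" where lr: "\<forall>v\<in>S. l v \<le> r v"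
    "\<forall>u\<in>S. \<forall>v\<in>S. u \<noteq> v \<longrightarrow> (0 < m u v \<longleftrightarrow> l u \<le> r v \<and> l v \<le> r u)"
    "\<forall>u\<in>S. \<forall>v\<in>S. \<not> ({l u..r u} \<subset> {l v..r v})"
    using pi unfolding proper_interval_def by blast
  have meet: "l v \<le> r p \<and> l p \<le> r v" "l v \<le> r a \<and> l a \<le> r v" "l v \<le> r b \<and> l b \<le> r v"
    using lr(2) in_S ne adj by blast+
  have disjoint: "\<not> (l p \<le> r a \<and> l a \<le> r p)" "\<not> (l p \<le> r b \<and> l b \<le> r p)"
    "\<not> (l a \<le> r b \<and> l b \<le> r a)"
    using lr(2) in_S ne nonadj by (metis less_numeral_extra(3))+
  have widths: "l p \<le> r p" "l a \<le> r a" "l b \<le> r b"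
    using lr(1) in_S by auto
  have not_nested: "\<not> (l v < l u \<and> r u < r v)" if "u \<in> S" for u
  proof
    assume nested: "l v < l u \<and> r u < r v"
    then have "{l u..r u} \<subseteq> {l v..r v}" "l v \<notin> {l u..r u}" "l v \<in> {l v..r v}"
      using lr(1) that in_S by auto
    then have "{l u..r u} \<subset> {l v..r v}"
      by blast
    then show False
      using lr(3) that in_S by blast
  qed
  have "\<not> (l v < l p \<and> r p < r v)" "\<not> (l v < l a \<and> r a < r v)" "\<not> (l v < l b \<and> r b < r v)"
    using not_nested in_S by blast+
  then show False
    using meet disjoint widths by linarith
qed

section \<open>PITVD via connected vertex sets\<close>

text \<open>Proper interval graphs and trees are closed under connected induced subgraphs, so
  quantifying over all connected vertex sets instead of the components yields an equivalent,
  but monotone, condition.\<close>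
definition pit_graph :: "'a set \<Rightarrow> ('a \<Rightarrow> 'a \<Rightarrow> nat) \<Rightarrow> bool" where
  "pit_graph S m \<longleftrightarrow> (\<forall>K \<subseteq> S. connected_on K m \<longrightarrow> proper_interval K m \<or> is_tree K m)"

lemma pit_graph_mono: "pit_graph S m \<Longrightarrow> S' \<subseteq> S \<Longrightarrow> pit_graph S' m"
  unfolding pit_graph_def by blast

lemma pit_graph_cong:
  assumes "\<forall>u\<in>S. \<forall>w\<in>S. m' u w = m u w"
  shows "pit_graph S m' \<longleftrightarrow> pit_graph S m"
proof -
  have "\<forall>u\<in>K. \<forall>w\<in>K. m' u w = m u w" if "K \<subseteq> S" for K
    using that assms by blast
  then show ?thesis
    unfolding pit_graph_def
    using connected_on_cong proper_interval_cong is_tree_cong by (metis (no_types, lifting))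
qed

lemma del_edges_agree: "K \<inter> X = {} \<Longrightarrow> \<forall>u\<in>K. \<forall>w\<in>K. del_edges m X u w = m u w"
  unfolding del_edges_def by auto

lemma connected_on_subset_component:
  assumes "finite S" "K \<subseteq> S" "connected_on K m"
  obtains C where "component S m C" "K \<subseteq> C"
proof -
  define F where "F = {C. K \<subseteq> C \<and> C \<subseteq> S \<and> connected_on C m}"
  have "finite F"
    unfolding F_def using assms(1) by (auto intro: rev_finite_subset[of "Pow S"])
  moreover have "K \<in> F"
    unfolding F_def using assms by blast
  ultimately obtain C where "C \<in> F" "K \<subseteq> C" "\<forall>C'\<in>F. C \<subseteq> C' \<longrightarrow> C = C'"
    using finite_has_maximal2[of F K] by blast
  then have "component S m C"
    unfolding component_def F_def by blast
  then show ?thesis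
    using that \<open>K \<subseteq> C\<close> by blast
qed

lemma pitvd_iff_pit_graph:
  assumes "finite V"
  shows "pitvd V m k \<longleftrightarrow>
    (\<exists>X\<subseteq>V. card X \<le> k \<and> simple_graph (V - X) m \<and> pit_graph (V - X) m)"
proof -
  have agree: "\<forall>u\<in>K. \<forall>w\<in>K. del_edges m X u w = m u w" if "K \<subseteq> V - X" for K X
    using that by (intro del_edges_agree) blast
  have component_del: "component (V - X) (del_edges m X) C \<longleftrightarrow> component (V - X) m C" for X C
  proof -
    have "connected_on C' (del_edges m X) \<longleftrightarrow> connected_on C' m" if "C' \<subseteq> V - X" for C'
      using connected_on_cong[OF agree[OF that]] .
    then show ?thesis
      unfolding component_def by (metis (no_types, lifting))
  qed
  have pit_del: "proper_interval C (del_edges m X) \<or> is_tree C (del_edges m X) \<longleftrightarrow>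
      proper_interval C m \<or> is_tree C m" if "component (V - X) m C" for X C
  proof -
    have "C \<subseteq> V - X"
      using that unfolding component_def by blast
    then show ?thesis
      using proper_interval_cong[OF agree] is_tree_cong[OF agree] by simp
  qed
  have components: "(\<forall>C. component (V - X) m C \<longrightarrow> proper_interval C m \<or> is_tree C m)
    \<longleftrightarrow> pit_graph (V - X) m" for X
  proof
    assume comps: "\<forall>C. component (V - X) m C \<longrightarrow> proper_interval C m \<or> is_tree C m"
    show "pit_graph (V - X) m"
      unfolding pit_graph_def
    proof (intro allI impI)
      fix K assume K: "K \<subseteq> V - X" "connected_on K m"
      then obtain C where "component (V - X) m C" "K \<subseteq> C"
        using connected_on_subset_component[of "V - X" K m] assms by blast
      then show "proper_interval K m \<or> is_tree K m"
        using comps K proper_interval_subset is_tree_subset by blast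
    qed
  qed (simp add: pit_graph_def component_def)
  have "simple_graph (V - X) (del_edges m X) \<longleftrightarrow> simple_graph (V - X) m" for X
    using simple_graph_cong[OF agree] by blast
  then show ?thesis
    unfolding pitvd_def using components by (simp add: component_del pit_del)
qed

lemma pitvd_subset:
  assumes "finite V" "W \<subseteq> V" "pitvd V m k"
  shows "pitvd W m k"
proof -
  obtain X where X: "X \<subseteq> V" "card X \<le> k" "simple_graph (V - X) m" "pit_graph (V - X) m"
    using assms(3) pitvd_iff_pit_graph[OF assms(1)] by blast
  have "card (X \<inter> W) \<le> k"
    using X(1,2) assms(1) card_mono[of X "X \<inter> W"] finite_subset by fastforce
  moreover have sub: "W - X \<inter> W \<subseteq> V - X"
    using assms(2) by blast
  moreover have "simple_graph (W - X \<inter> W) m" "pit_graph (W - X \<inter> W) m"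
    using simple_graph_mono[OF X(3) sub] pit_graph_mono[OF X(4) sub] .
  ultimately show ?thesis
    unfolding pitvd_iff_pit_graph[OF finite_subset[OF assms(2,1)]] by blast
qed

lemma pitvd_cong:
  assumes "finite V" "\<forall>u\<in>V. \<forall>w\<in>V. m' u w = m u w"
  shows "pitvd V m' k \<longleftrightarrow> pitvd V m k"
proof -
  have agree: "\<forall>u\<in>V - X. \<forall>w\<in>V - X. m' u w = m u w" for X
    using assms(2) by blast
  show ?thesis
    unfolding pitvd_iff_pit_graph[OF assms(1)]
    by (simp add: simple_graph_cong[OF agree] pit_graph_cong[OF agree])
qed

section \<open>A pendant tree with a branching vertex\<close>

locale pendant_branch =
  fixes V :: "'a set" and m :: "'a \<Rightarrow> 'a \<Rightarrow> nat" and x v a b :: 'a and C :: "'a set"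
    and P :: "'a list"
  assumes multigraph: "multigraph V m"
    and pendant: "pendant_tree V m x C"
    and v_in_C: "v \<in> C"
    and v_closest: "\<forall>u\<in>C. 3 \<le> degree V m u \<longrightarrow> dist V m x v \<le> dist V m x u"
    and path_P: "path_in (C \<union> {x}) m x v P"
    and ab: "a \<in> C" "b \<in> C" "a \<noteq> b" "0 < m v a" "0 < m v b" "a \<notin> set P" "b \<notin> set P"
begin

abbreviation T :: "'a set" where "T \<equiv> C \<union> {x}"

abbreviation R :: "'a set" where "R \<equiv> C - (set P \<union> {a, b})"

lemma m_sym: "\<forall>u w. m u w = m w u"
  and no_loop: "m u u = 0"
  and finite_V: "finite V"
  and edge_in_V: "0 < m u w \<Longrightarrow> u \<in> V \<and> w \<in> V"
  using multigraph unfolding multigraph_def by blast+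

lemma component_C: "component (V - {x}) (del_edges m {x}) C"
  and tree_T: "is_tree T m"
  and x_in_V: "x \<in> V"
  using pendant unfolding pendant_tree_def cut_vertex_def by blast+

lemma C_subset: "C \<subseteq> V - {x}"
  using component_C unfolding component_def by blast

lemma T_subset: "T \<subseteq> V"
  using C_subset x_in_V by blast

lemma acyclic_T: "\<not> has_cycle T m"
  using tree_T unfolding is_tree_def by blast

lemma connected_C: "connected_on C m"
proof -
  have "\<forall>u\<in>C. \<forall>w\<in>C. del_edges m {x} u w = m u w"
    using C_subset by (intro del_edges_agree) blast
  from connected_on_cong[OF this] show ?thesis
    using component_C unfolding component_def by blast
qed

lemma walk_avoiding_x_subset_C:
  assumes "walk_in V m ps" "x \<notin> set ps" "set ps \<inter> C \<noteq> {}"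
  shows "set ps \<subseteq> C"
proof -
  have ps_sub: "set ps \<subseteq> V - {x}"
    using assms(1,2) unfolding walk_in_def by blast
  have "\<forall>u\<in>set ps. \<forall>w\<in>set ps. del_edges m {x} u w = m u w"
    using assms(2) by (intro del_edges_agree) blast
  then have conn_ps: "connected_on (set ps) (del_edges m {x})"
    using connected_on_set_walk[OF m_sym assms(1)] connected_on_cong by blast
  have conn_C: "connected_on C (del_edges m {x})"
    and maximal: "\<And>C'. C \<subseteq> C' \<Longrightarrow> C' \<subseteq> V - {x} \<Longrightarrow> connected_on C' (del_edges m {x}) \<Longrightarrow> C' = C"
    using component_C unfolding component_def by blast+
  have "C \<inter> set ps \<noteq> {}"
    using assms(3) by blast
  then have "C \<union> set ps = C"
    using maximal connected_on_Un[OF conn_C conn_ps] ps_sub C_subset by (meson Un_least Un_upper1)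
  then show ?thesis
    by blast
qed

lemma edge_from_C:
  assumes "c \<in> C" "0 < m c u"
  shows "u \<in> T"
proof (cases "u = x")
  case False
  have "walk_in V m [c, u]"
    using assms edge_in_V unfolding walk_in_Cons by auto
  then have "set [c, u] \<subseteq> C"
    using walk_avoiding_x_subset_C[of "[c, u]"] assms(1) False C_subset by auto
  then show ?thesis
    by simp
qed simp

lemma connected_avoiding_x_subset_C:
  assumes "K \<subseteq> V" "connected_on K m" "x \<notin> K" "c \<in> K" "c \<in> C"
  shows "K \<subseteq> C"
proof
  fix y assume "y \<in> K"
  then obtain ws where ws: "walk_in K m ws" "hd ws = c" "last ws = y"
    using assms(2,4) unfolding connected_on_def by blast
  then have "walk_in V m ws" "x \<notin> set ws" "c \<in> set ws" "y \<in> set ws"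
    using walk_in_mono[OF _ assms(1)] assms(3) unfolding walk_in_def by auto
  then show "y \<in> C"
    using walk_avoiding_x_subset_C assms(5) by blast
qed

lemma x_unique_neighbour:
  assumes "c1 \<in> C" "c2 \<in> C" "0 < m x c1" "0 < m x c2"
  shows "c1 = c2"
proof (rule ccontr)
  assume "c1 \<noteq> c2"
  then have "path_in T m c1 c2 [c1, x, c2]"
    using assms C_subset m_sym unfolding path_in_def walk_in_Cons by auto
  moreover obtain ws where "walk_in C m ws" "hd ws = c1" "last ws = c2"
    using connected_C assms(1,2) unfolding connected_on_def by blast
  moreover have "walk_in T m ws"
    using \<open>walk_in C m ws\<close> walk_in_mono by blast
  ultimately have "set [c1, x, c2] \<subseteq> set ws"
    using path_in_subset_walk[OF acyclic_T m_sym] \<open>hd ws = c1\<close> \<open>last ws = c2\<close> by blast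
  then show False
    using \<open>walk_in C m ws\<close> C_subset unfolding walk_in_def by auto
qed

lemma T_no_triangle:
  assumes "u1 \<in> T" "u2 \<in> T" "u3 \<in> T" "u1 \<noteq> u2" "u1 \<noteq> u3" "u2 \<noteq> u3"
    "0 < m u1 u2" "0 < m u2 u3" "0 < m u3 u1"
  shows False
proof -
  have "has_cycle T m"
    unfolding has_cycle_def using assms by (intro exI[of _ "[u1, u2, u3]"]) (auto simp: walk_in_Cons)
  then show False
    using acyclic_T by simp
qed

lemma P_walk: "walk_in T m P"
  and P_distinct: "distinct P"
  and P_hd: "hd P = x"
  and P_last: "last P = v"
  using path_P unfolding path_in_def by blast+

lemma P_nth_in_T: "i < length P \<Longrightarrow> P ! i \<in> T"
  using P_walk nth_mem[of i P] unfolding walk_in_def by blast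

lemma P_ne: "P \<noteq> []"
  using P_walk unfolding walk_in_def by blast

lemma v_in_P: "v \<in> set P"
  using P_ne P_last last_in_set by metis

lemma length_P: "2 \<le> length P"
  using P_ne P_hd P_last v_in_C C_subset by (cases P) (auto split: if_splits simp: Suc_le_eq)

lemma walk_from_x_one_side:
  assumes "walk_in S m ws" "S \<subseteq> V" "hd ws = x"
  obtains W where "walk_in S m W" "hd W = x" "last W = last ws" "length W \<le> length ws"
    "last ws \<in> C \<Longrightarrow> set W \<subseteq> T" "last ws \<notin> C \<Longrightarrow> set W \<inter> C = {}"
proof (cases "last ws = x")
  case True
  have "walk_in S m [x]" "length [x] \<le> length ws"
    using assms(1,3) unfolding walk_in_def by (auto simp: Suc_le_eq dest: hd_in_set)
  then show ?thesis
    using that[of "[x]"] True C_subset by auto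
next
  case False
  obtain W where W: "walk_in S m W" "hd W = x" "last W = last ws" "x \<notin> set (tl W)"
    "length W \<le> length ws"
    using walk_in_suffix_from[OF assms(1), of x] assms(1,3) by (metis hd_in_set walk_in_def)
  have W_Cons: "W = x # tl W" and tl_ne: "tl W \<noteq> []"
    using W(1-3) False unfolding walk_in_def by (cases W; auto)+
  have "walk_in S m (tl W)" "last ws \<in> set (tl W)"
    using W(1,3) W_Cons tl_ne walk_in_Cons[of S m x "tl W"] by (metis, metis last_ConsR last_in_set)
  then have "set (tl W) \<subseteq> C \<or> set (tl W) \<inter> C = {}" "last ws \<in> set (tl W)"
    using walk_avoiding_x_subset_C[OF walk_in_mono[OF _ assms(2)] W(4)] by blast+
  moreover have "set W = insert x (set (tl W))"
    using W_Cons by (metis list.set(2))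
  ultimately show ?thesis
    using that[OF W(1-3,5)] C_subset by blast
qed

lemma walk_from_x:
  assumes "K \<subseteq> V" "connected_on K m" "x \<in> K" "y \<in> K"
  obtains W where "walk_in K m W" "hd W = x" "last W = y"
    "y \<in> C \<Longrightarrow> set W \<subseteq> T" "y \<notin> C \<Longrightarrow> set W \<inter> C = {}"
proof -
  obtain ws where ws: "walk_in K m ws" "hd ws = x" "last ws = y"
    using assms(2-4) unfolding connected_on_def by blast
  show ?thesis
    using walk_from_x_one_side[OF ws(1) assms(1) ws(2)] that ws(3) by blast
qed

lemma length_P_le_walk:
  assumes "walk_in V m ws" "hd ws = x" "last ws = v"
  shows "length P \<le> length ws"
proof -
  obtain W where W: "walk_in V m W" "hd W = x" "last W = v" "length W \<le> length ws"
    "set W \<subseteq> T"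
    using walk_from_x_one_side[OF assms(1) order_refl assms(2)] assms(3) v_in_C by blast
  then have "walk_in T m W"
    unfolding walk_in_def by blast
  then have "set P \<subseteq> set W"
    using path_in_subset_walk[OF acyclic_T m_sym path_P] W(2,3) by blast
  have "length P = card (set P)"
    using distinct_card[OF P_distinct] by simp
  also have "\<dots> \<le> card (set W)"
    using \<open>set P \<subseteq> set W\<close> by (simp add: card_mono)
  also have "\<dots> \<le> length ws"
    using card_length[of W] W(4) by linarith
  finally show ?thesis .
qed

lemma length_P_le_dist: "length P \<le> Suc (dist V m x v)"
  using walk_of_length_dist[OF walk_in_mono[OF P_walk T_subset]] length_P_le_walk P_hd P_last
  by metis

lemma P_inner_degree:
  assumes "0 < i" "Suc i < length P"
  shows "degree V m (P ! i) < 3"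
proof (rule ccontr)
  assume "\<not> degree V m (P ! i) < 3"
  moreover have "P ! i \<in> C"
  proof -
    have "P ! i \<noteq> P ! 0"
      using P_distinct P_ne assms nth_eq_iff_index_eq[of P i 0] by simp
    then show ?thesis
      using P_nth_in_T[of i] P_hd P_ne assms by (auto simp: hd_conv_nth)
  qed
  ultimately have "dist V m x v \<le> dist V m x (P ! i)"
    using v_closest by simp
  also have "\<dots> \<le> i"
    using dist_le_walk[OF walk_in_take[OF walk_in_mono[OF P_walk T_subset], of "Suc i"]] assms P_hd P_ne
    by (simp add: last_conv_nth)
  finally show False
    using length_P_le_dist assms(2) by linarith
qed

lemma P_next_unique:
  assumes "Suc j < length P" "y \<in> T" "0 < m (P ! j) y" "j = 0 \<or> y \<noteq> P ! (j - 1)"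
  shows "y = P ! Suc j"
proof (rule ccontr)
  assume ne: "y \<noteq> P ! Suc j"
  have next_T: "P ! Suc j \<in> T" "0 < m (P ! j) (P ! Suc j)"
    using P_nth_in_T[OF assms(1)] P_walk assms(1) unfolding walk_in_def by blast+
  show False
  proof (cases j)
    case 0
    then have "P ! j = x" "P ! Suc j \<noteq> x"
      using P_hd P_ne P_distinct assms(1) nth_eq_iff_index_eq[of P "Suc 0" 0]
      by (auto simp: hd_conv_nth)
    moreover have "y \<noteq> x"
      using assms(3) \<open>P ! j = x\<close> no_loop by (metis less_irrefl)
    ultimately show False
      using x_unique_neighbour[of y "P ! Suc j"] assms(2,3) next_T ne by auto
  next
    case (Suc j')
    have "P ! j' \<noteq> P ! Suc j" "P ! j' \<in> T" "0 < m (P ! j) (P ! j')"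
      using P_walk P_distinct P_nth_in_T[of j'] assms(1) Suc m_sym nth_eq_iff_index_eq[of P j' "Suc j"]
      unfolding walk_in_def by auto
    moreover have "y \<noteq> P ! j'"
      using assms(4) Suc by simp
    ultimately have "3 \<le> degree V m (P ! j)"
      using degree_ge_3[OF finite_V, of "P ! j'" "P ! Suc j" y m "P ! j"] assms(2,3) next_T ne T_subset
      by blast
    then show False
      using P_inner_degree[of j] Suc assms(1) by simp
  qed
qed

lemma P_subset_walk_from_x:
  assumes "walk_in T m qs" "hd qs = x" "last qs = r" "r \<in> C" "r \<notin> set P"
  shows "set P \<subseteq> set qs"
proof -
  obtain Q where Q: "path_in T m x r Q" "set Q \<subseteq> set qs"
    using walk_in_imp_path_in[OF assms(1)] assms(2,3) by blast
  have Q_walk: "walk_in T m Q" and Q_distinct: "distinct Q" and Q_ne: "Q \<noteq> []"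
    and Q_hd: "hd Q = x" and Q_last: "last Q = r"
    using Q(1) unfolding path_in_def walk_in_def by blast+
  have "j < length Q \<and> (\<forall>i\<le>j. Q ! i = P ! i)" if "j < length P" for j
    using that
  proof (induction j)
    case 0
    then show ?case
      using Q_ne Q_hd P_ne P_hd by (simp add: hd_conv_nth)
  next
    case (Suc j)
    then have IH: "j < length Q" "\<forall>i\<le>j. Q ! i = P ! i"
      by simp_all
    have "Suc j < length Q"
    proof (rule ccontr)
      assume "\<not> Suc j < length Q"
      then have "j = length Q - 1"
        using IH(1) by linarith
      then have "Q ! j = r"
        using Q_ne Q_last by (simp add: last_conv_nth)
      then show False
        using IH(2) Suc.prems assms(5) by (metis Suc_lessD nth_mem order_refl)
    qed
    moreover have "Q ! Suc j = P ! Suc j"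
    proof (rule P_next_unique)
      have "Q ! Suc j \<in> set Q" "0 < m (Q ! j) (Q ! Suc j)"
        using Q_walk \<open>Suc j < length Q\<close> unfolding walk_in_def by auto
      then show "Q ! Suc j \<in> T" "0 < m (P ! j) (Q ! Suc j)"
        using Q_walk IH(2) unfolding walk_in_def by auto
      have "Q ! Suc j \<noteq> Q ! (j - 1)"
        using Q_distinct \<open>Suc j < length Q\<close> nth_eq_iff_index_eq[of Q "Suc j" "j - 1"] by simp
      then show "j = 0 \<or> Q ! Suc j \<noteq> P ! (j - 1)"
        using IH(2) by simp
    qed (use Suc.prems in simp)
    ultimately show ?case
      using IH(2) le_Suc_eq by auto
  qed
  then have "set P \<subseteq> set Q"
    by (auto simp: in_set_conv_nth) (metis order_refl)
  then show ?thesis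
    using Q(2) by blast
qed

lemma P_subset_connected:
  assumes "K \<subseteq> V" "connected_on K m" "x \<in> K" "r \<in> K" "r \<in> C" "r \<notin> set P"
  shows "set P \<subseteq> K"
proof -
  obtain W where W: "walk_in K m W" "hd W = x" "last W = r" "set W \<subseteq> T"
    using walk_from_x[OF assms(1-4)] assms(5) by metis
  then have "walk_in T m W"
    unfolding walk_in_def by blast
  then have "set P \<subseteq> set W"
    using P_subset_walk_from_x W(2,3) assms(5,6) by blast
  then show ?thesis
    using W(1) unfolding walk_in_def by blast
qed

lemma cycle_meeting_C_in_T:
  assumes "3 \<le> length cs" "distinct cs" "walk_in V m cs" "0 < m (last cs) (hd cs)"
    "set cs \<inter> C \<noteq> {}"
  shows "set cs \<subseteq> T"
proof -
  obtain ws where ws: "walk_in V m ws" "set ws = set cs - {x}"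
    using cycle_minus_vertex_walk[OF assms(1-4)] by blast
  moreover have "set ws \<inter> C \<noteq> {}"
    using assms(5) C_subset ws(2) by blast
  ultimately have "set cs - {x} \<subseteq> C"
    using walk_avoiding_x_subset_C[of ws] by blast
  then show ?thesis
    by blast
qed

text \<open>The predecessor of v on P, a and b are pairwise non-adjacent, as T has no triangle.\<close>
lemma not_proper_interval_claw_at_v:
  assumes "set P \<union> {a, b} \<subseteq> L"
  shows "\<not> proper_interval L m"
proof
  assume pi: "proper_interval L m"
  define p where "p = P ! (length P - 2)"
  have "Suc (length P - 2) = length P - 1"
    using length_P by linarith
  then have "Suc (length P - 2) < length P" "P ! Suc (length P - 2) = v"
    using P_ne P_last by (auto simp: last_conv_nth)
  then have p_v: "0 < m p v" and p_P: "p \<in> set P" and p_T: "p \<in> T"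
    using P_walk P_nth_in_T[of "length P - 2"] unfolding walk_in_def p_def by auto
  have ne: "p \<noteq> v" "p \<noteq> a" "p \<noteq> b" "v \<noteq> a" "v \<noteq> b"
    using p_v p_P ab no_loop by (metis less_irrefl)+
  have T: "v \<in> T" "a \<in> T" "b \<in> T"
    using v_in_C ab by auto
  have "m p a = 0" "m p b = 0" "m a b = 0"
    using T_no_triangle[of p v a] T_no_triangle[of p v b] T_no_triangle[of v a b]
      T p_T ne ab p_v m_sym by (metis neq0_conv)+
  then show False
    using proper_interval_no_claw[OF pi, of v p a b] assms p_P v_in_P ne ab(3) p_v ab(4,5) m_sym
    by auto
qed

lemma no_cycle_through_x:
  assumes pit: "pit_graph S m" and S: "set P \<union> {a, b} \<subseteq> S" "K - C \<subseteq> S"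
    and K: "K \<subseteq> V" "connected_on K m" "x \<in> K"
  shows "\<not> has_cycle K m"
proof
  assume "has_cycle K m"
  then obtain cs where cs: "3 \<le> length cs" "distinct cs" "walk_in K m cs" "0 < m (last cs) (hd cs)"
    unfolding has_cycle_def by blast
  have cycle_cs: "has_cycle (set cs) m"
    using cs walk_in_set unfolding has_cycle_def by blast
  show False
  proof (cases "set cs \<inter> C = {}")
    case False
    then have "set cs \<subseteq> T"
      using cycle_meeting_C_in_T[OF cs(1,2) walk_in_mono[OF cs(3) K(1)] cs(4)] by blast
    then show False
      using has_cycle_mono[OF cycle_cs] acyclic_T by blast
  next
    case True
    have hd_cs: "hd cs \<in> K" "hd cs \<notin> C"
      using cs(1,3) True unfolding walk_in_def by (auto dest: hd_in_set)
    then obtain W where W: "walk_in K m W" "hd W = x" "last W = hd cs" "set W \<inter> C = {}"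
      using walk_from_x[OF K] by metis
    define L where "L = set cs \<union> set W \<union> set P \<union> {v, a} \<union> {v, b}"
    have "connected_on L m"
    proof -
      have "cs \<noteq> []" "W \<noteq> []"
        using cs(3) W(1) unfolding walk_in_def by blast+
      then have "hd cs \<in> set cs \<inter> set W" "x \<in> set W \<inter> set P"
        using W(2,3) P_ne P_hd by (metis IntI hd_in_set last_in_set)+
      then have "connected_on (set cs \<union> set W) m"
        using connected_on_Un[OF connected_on_set_walk[OF m_sym cs(3)] connected_on_set_walk[OF m_sym W(1)]]
        by blast
      then have "connected_on (set cs \<union> set W \<union> set P) m"
        using connected_on_Un[OF _ connected_on_set_walk[OF m_sym P_walk]] \<open>x \<in> set W \<inter> set P\<close>
        by blast
      then have "connected_on (set cs \<union> set W \<union> set P \<union> {v, a}) m"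
        using connected_on_Un[OF _ connected_on_edge[OF ab(4) m_sym]] v_in_P by blast
      then show ?thesis
        unfolding L_def using connected_on_Un[OF _ connected_on_edge[OF ab(5) m_sym]] v_in_P by blast
    qed
    moreover have "L \<subseteq> S"
    proof -
      have "set cs \<union> set W \<subseteq> K - C"
        using cs(3) W(1,4) True unfolding walk_in_def by blast
      then show ?thesis
        unfolding L_def using S v_in_P by blast
    qed
    moreover have "has_cycle L m"
      using has_cycle_mono[OF cycle_cs, of L] unfolding L_def by blast
    moreover have "set P \<union> {a, b} \<subseteq> L"
      unfolding L_def by blast
    ultimately have "proper_interval L m \<or> is_tree L m"
      using pit[unfolded pit_graph_def, rule_format, of L] by blast
    then show False
      using not_proper_interval_claw_at_v[OF \<open>set P \<union> {a, b} \<subseteq> L\<close>] \<open>has_cycle L m\<close> unfolding is_tree_def by blast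
  qed
qed

definition lifted :: "'a set \<Rightarrow> 'a set" where
  "lifted X = (if X \<inter> set P = {} \<and> X \<inter> {a, b} \<noteq> {} then X - {a, b} \<union> {v} else X)"

lemma lifted_subset: "X \<subseteq> V \<Longrightarrow> lifted X \<subseteq> V"
  using v_in_C C_subset unfolding lifted_def by auto

lemma card_lifted:
  assumes "finite X"
  shows "card (lifted X) \<le> card X"
proof (cases "X \<inter> set P = {} \<and> X \<inter> {a, b} \<noteq> {}")
  case True
  have "card (insert v (X - {a, b})) \<le> Suc (card (X - {a, b}))"
    using assms by (simp add: card_insert_if)
  also have "card (X - {a, b}) < card X"
    using True assms by (intro psubset_card_mono) auto
  finally show ?thesis
    using True unfolding lifted_def by simp
next
  case False
  then show ?thesis
    unfolding lifted_def by auto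
qed

lemma lifted_removes: "X - lifted X \<subseteq> {a, b}"
  unfolding lifted_def by auto

lemma lifted_avoiding_P:
  "lifted X \<inter> set P = {} \<Longrightarrow> lifted X = X \<and> X \<inter> (set P \<union> {a, b}) = {}"
  using v_in_P unfolding lifted_def by (auto split: if_splits)

lemma simple_graph_lifted:
  assumes "X \<subseteq> V - R" "simple_graph (V - R - X) m"
  shows "simple_graph (V - lifted X) m"
  unfolding simple_graph_def
proof (intro ballI)
  fix u w assume uw: "u \<in> V - lifted X" "w \<in> V - lifted X"
  consider "u \<in> T" "w \<in> T" | "u \<in> C" "w \<notin> T" | "u \<notin> T" "w \<in> C" | "u \<notin> C" "w \<notin> C"
    by blast
  then show "m u w \<le> 1"
  proof cases
    case 1
    then show ?thesis
      using tree_T unfolding is_tree_def simple_graph_def by blast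
  next
    case 2
    then show ?thesis
      using edge_from_C[of u w] by (metis le0 neq0_conv)
  next
    case 3
    then show ?thesis
      using edge_from_C[of w u] m_sym by (metis le0 neq0_conv)
  next
    case 4
    then have "u \<in> V - R - X" "w \<in> V - R - X"
      using uw lifted_removes[of X] ab(1,2) by blast+
    then show ?thesis
      using assms(2) unfolding simple_graph_def by blast
  qed
qed

lemma pit_graph_lifted:
  assumes X: "X \<subseteq> V - R" "simple_graph (V - R - X) m" "pit_graph (V - R - X) m"
  shows "pit_graph (V - lifted X) m"
  unfolding pit_graph_def
proof (intro allI impI)
  fix K assume K: "K \<subseteq> V - lifted X" "connected_on K m"
  have K_V: "K \<subseteq> V"
    using K(1) by blast
  show "proper_interval K m \<or> is_tree K m"
  proof (cases "K \<inter> (C - set P) = {}")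
    case True
    then have "K \<subseteq> V - R - X"
      using K(1) lifted_removes[of X] ab(1,2,6,7) by blast
    then show ?thesis
      using X(3) K(2) unfolding pit_graph_def by blast
  next
    case False
    then obtain r where r: "r \<in> K" "r \<in> C" "r \<notin> set P"
      by blast
    show ?thesis
    proof (cases "x \<in> K")
      case False
      then have "K \<subseteq> T"
        using connected_avoiding_x_subset_C[OF K_V K(2) False r(1,2)] by blast
      then show ?thesis
        using is_tree_subset[OF tree_T _ K(2)] by blast
    next
      case True
      have "set P \<subseteq> K"
        by (rule P_subset_connected[OF K_V K(2) True r])
      then have "lifted X = X" "X \<inter> (set P \<union> {a, b}) = {}"
        using lifted_avoiding_P[of X] K(1) by blast+
      moreover have "set P \<union> {a, b} \<subseteq> V - R"
        using P_walk T_subset ab(1,2) unfolding walk_in_def by blast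
      moreover have "K - C \<subseteq> V - R - X"
        using K(1) lifted_removes[of X] ab(1,2) by blast
      ultimately have "\<not> has_cycle K m"
        using no_cycle_through_x[OF X(3) _ _ K_V K(2) True] by blast
      moreover have "simple_graph K m"
        using simple_graph_mono[OF simple_graph_lifted[OF X(1,2)] K(1)] .
      ultimately show ?thesis
        unfolding is_tree_def using K(2) by blast
    qed
  qed
qed

lemma pitvd_of_reduced:
  assumes "pitvd (V - R) m k"
  shows "pitvd V m k"
proof -
  obtain X where X: "X \<subseteq> V - R" "card X \<le> k" "simple_graph (V - R - X) m"
    "pit_graph (V - R - X) m"
    using assms pitvd_iff_pit_graph[OF finite_subset[OF _ finite_V], of "V - R"] by blast
  have "card (lifted X) \<le> k"
    using card_lifted[OF finite_subset[OF X(1)]] X(2) finite_V by fastforce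
  moreover have "lifted X \<subseteq> V"
    using lifted_subset[of X] X(1) by blast
  ultimately show ?thesis
    unfolding pitvd_iff_pit_graph[OF finite_V]
    using simple_graph_lifted[OF X(1,3)] pit_graph_lifted[OF X(1,3,4)] by blast
qed

end

theorem lemma19:
  fixes V :: "'a set" and m :: "'a \<Rightarrow> 'a \<Rightarrow> nat" and k :: nat
    and x v a b :: 'a and C :: "'a set" and P :: "'a list"
  assumes G: "multigraph V m"
    and cut: "cut_vertex V m x"
    and pend: "pendant_tree V m x C"
    and HC_ne: "\<exists>u\<in>C. 3 \<le> degree V m u"
    and v_H: "v \<in> C" "3 \<le> degree V m v"
    and v_min: "\<forall>u\<in>C. 3 \<le> degree V m u \<longrightarrow> dist V m x v \<le> dist V m x u"
    and P: "path_in (C \<union> {x}) m x v P"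
    and ab: "a \<in> C" "b \<in> C" "a \<noteq> b" "0 < m v a" "0 < m v b"
            "a \<notin> set P" "b \<notin> set P"
  shows "pitvd V m k \<longleftrightarrow>
         pitvd (V - (C - (set P \<union> {a, b}))) (del_edges m (C - (set P \<union> {a, b}))) k"
proof -
  interpret pendant_branch V m x v a b C P
    using G pend v_H v_min P ab by unfold_locales
  have "finite (V - R)"
    using finite_V by blast
  moreover have "\<forall>u\<in>V - R. \<forall>w\<in>V - R. del_edges m R u w = m u w"
    by (intro del_edges_agree) blast
  ultimately have "pitvd (V - R) (del_edges m R) k \<longleftrightarrow> pitvd (V - R) m k"
    by (rule pitvd_cong)
  then show ?thesis
    using pitvd_subset[OF finite_V, of "V - R" m k] pitvd_of_reduced by blast
qed

end
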